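(* Let $k\ge 3$ be odd and let $G=(V,E)$ be a $k$-uniform hyperstar of size $d\ge 2$, with $V=[n]$, $E=\{e_1,\ldots,e_d\}$, and heart the vertex $1$. Let $\mathcal L$ be its Laplacian tensor and, for $r=0,1,\ldots,d$, let $f_r(\lambda)=(\lambda-d)(1-\lambda)^{k-1}+r$. Then: (1) A real number $\lambda\neq 1$ is an H-eigenvalue of $\mathcal L$ if and only if it is a real root of $f_r$ for some $r\in\{0,1,\ldots,d\}$. (2) If $\lambda\neq1$ is a real root of $f_r$, then, up to a nonzero constant multiple, the H-eigenvectors of $\mathcal L$ corresponding to $\lambda$ are exactly the vectors $\mathbf x$ obtained as follows: take $x_1=1-\lambda$; choose any $r$ edges of $G$ and set $x_j=1$ for every vertex $j\neq 1$ lying in one of these $r$ edges; set $x_j=0$ for all other vertices $j$.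
   Context: A $k$-uniform hyperstar of size $d$ is a hypergraph whose vertex set is a disjoint union $V=V_0\cup V_1\cup\cdots\cup V_d$ with $|V_0|=1$, $|V_1|=\cdots=|V_d|=k-1$, and edge set $\{V_0\cup V_i: i\in[d]\}$; the vertex in $V_0$ is the heart. For a $k$-uniform hypergraph with $d_i$ the number of edges containing $i$, the Laplacian tensor $\mathcal L=\mathcal D-\mathcal A$ ($\mathcal D$ diagonal with entries $d_i$, $\mathcal A$ with entries $\frac1{(k-1)!}$ at index tuples forming an edge and $0$ otherwise) satisfies $(\mathcal L\mathbf x^{k-1})_i=d_ix_i^{k-1}-\sum_{e\in E,\,i\in e}\prod_{s\in e\setminus\{i\}}x_s$. A real $\lambda$ is an H-eigenvalue of $\mathcal L$ with H-eigenvector $\mathbf x\in\mathbb R^n\setminus\{0\}$ if $(\mathcal L\mathbf x^{k-1})_i=\lambda x_i^{k-1}$ for all $i\in[n]$. *)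

theory Defs
  imports Main Complex_Main
begin

text \<open>A k-uniform hypergraph on vertex set [n] = {1..n} is given by its edge set
  E :: nat set set.  Vectors in R^n are functions nat => real, only the values
  on {1..n} matter.\<close>

text \<open>k-uniform hyperstar of size d on V = {1..n} with heart 1: d distinct edges,
  each of size k containing 1, pairwise meeting exactly in {1}, covering V.
  (Equivalently V = V0 \<union> V1 \<union> ... \<union> Vd disjoint, V0 = {1}, |Vi| = k-1,
  edges V0 \<union> Vi.)\<close>
definition hyperstar :: "nat \<Rightarrow> nat \<Rightarrow> nat \<Rightarrow> nat set set \<Rightarrow> bool" where
  "hyperstar k d n E \<longleftrightarrow>
     finite E \<and> card E = d \<and>
     (\<forall>e\<in>E. e \<subseteq> {1..n} \<and> card e = k \<and> (1::nat) \<in> e) \<and>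
     (\<forall>e\<in>E. \<forall>e'\<in>E. e \<noteq> e' \<longrightarrow> e \<inter> e' = {1}) \<and>
     \<Union>E = {1..n}"

definition hdeg :: "nat set set \<Rightarrow> nat \<Rightarrow> nat" where
  "hdeg E i = card {e\<in>E. i \<in> e}"

definition lap_apply :: "nat set set \<Rightarrow> nat \<Rightarrow> (nat \<Rightarrow> real) \<Rightarrow> nat \<Rightarrow> real" where
  "lap_apply E k x i =
     real (hdeg E i) * x i ^ (k - 1) - (\<Sum>e\<in>{e\<in>E. i \<in> e}. \<Prod>s\<in>e - {i}. x s)"

definition H_eigenvector :: "nat \<Rightarrow> nat set set \<Rightarrow> nat \<Rightarrow> real \<Rightarrow> (nat \<Rightarrow> real) \<Rightarrow> bool" where
  "H_eigenvector n E k lam x \<longleftrightarrow>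
     (\<exists>i\<in>{1..n}. x i \<noteq> 0) \<and> (\<forall>i\<in>{1..n}. lap_apply E k x i = lam * x i ^ (k - 1))"

definition H_eigenvalue :: "nat \<Rightarrow> nat set set \<Rightarrow> nat \<Rightarrow> real \<Rightarrow> bool" where
  "H_eigenvalue n E k lam \<longleftrightarrow> (\<exists>x. H_eigenvector n E k lam x)"

definition fpoly :: "nat \<Rightarrow> nat \<Rightarrow> nat \<Rightarrow> real \<Rightarrow> real" where
  "fpoly k d r lam = (lam - real d) * (1 - lam) ^ (k - 1) + real r"

definition star_vec :: "real \<Rightarrow> nat set set \<Rightarrow> nat \<Rightarrow> real" where
  "star_vec lam S j = (if j = 1 then 1 - lam else if j \<in> \<Union>S then 1 else 0)"

end

theory Submission
  imports Defs
begin

text \<open>At a leaf j of an edge e the eigen-equation reads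
  x_j^(k-1) = c * prod_{s in e - {1, j}} x_s  with  c = x_1 / (1 - lam).
  Multiplying by x_j shows that x_j^k is the same for all leaves of e, so for odd k all
  leaves of e carry one common value t, and then t^(k-1) = c t^(k-2) forces t in {0, c}.
  Hence every eigenvector is c times a star vector.  For star vectors the leaf equations
  hold identically, while the heart equation is exactly f_r(lam) = 0, where r is the number
  of edges carrying the value c.\<close>

lemma fpoly_root_unique:
  assumes "fpoly k d r lam = 0" and "fpoly k d r' lam = 0"
  shows "r = r'"
  using assms unfolding fpoly_def by simp

locale hyperstar_graph =
  fixes k d n :: nat and E :: "nat set set"
  assumes hyperstar: "hyperstar k d n E" and k_ge_3: "3 \<le> k" and d_pos: "1 \<le> d"
begin

lemma finite_edges: "finite E" and card_edges: "card E = d"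
  and edge_subset: "e \<in> E \<Longrightarrow> e \<subseteq> {1..n}" and card_edge: "e \<in> E \<Longrightarrow> card e = k"
  and heart_in_edge: "e \<in> E \<Longrightarrow> 1 \<in> e"
  and edges_meet_at_heart: "e \<in> E \<Longrightarrow> e' \<in> E \<Longrightarrow> e \<noteq> e' \<Longrightarrow> e \<inter> e' = {1}"
  and edges_cover: "\<Union>E = {1..n}"
  using hyperstar unfolding hyperstar_def by auto

lemma finite_edge: "e \<in> E \<Longrightarrow> finite e"
  using card_edge k_ge_3 card.infinite by fastforce

lemma card_leaves: "e \<in> E \<Longrightarrow> card (e - {1}) = k - 1"
  using card_edge heart_in_edge finite_edge by (simp add: card_Diff_singleton)

lemma card_other_leaves: "e \<in> E \<Longrightarrow> j \<in> e - {1} \<Longrightarrow> card (e - {1} - {j}) = k - 2"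
  using card_leaves finite_edge by (simp add: card_Diff_singleton)

lemma heart_in_vertices: "1 \<in> {1..n}"
proof -
  obtain e where "e \<in> E"
    using card_edges d_pos by fastforce
  then show ?thesis
    using heart_in_edge edge_subset by blast
qed

lemma unique_edge:
  assumes "e \<in> E" "e' \<in> E" "j \<in> e" "j \<in> e'" "j \<noteq> 1"
  shows "e' = e"
  using edges_meet_at_heart assms by blast

lemma lap_apply_heart:
  "lap_apply E k x 1 = real d * x 1 ^ (k - 1) - (\<Sum>e\<in>E. \<Prod>s\<in>e - {1}. x s)"
proof -
  have "{e\<in>E. 1 \<in> e} = E"
    using heart_in_edge by auto
  then show ?thesis
    unfolding lap_apply_def hdeg_def using card_edges by simp
qed

lemma lap_apply_leaf:
  assumes e: "e \<in> E" and j: "j \<in> e - {1}"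
  shows "lap_apply E k x j = x j ^ (k - 1) - x 1 * (\<Prod>s\<in>e - {1} - {j}. x s)"
proof -
  have "{e'\<in>E. j \<in> e'} = {e}"
    using unique_edge[OF e] e j by blast
  moreover have "e - {j} = insert 1 (e - {1} - {j})" and "1 \<notin> e - {1} - {j}"
    using heart_in_edge[OF e] j by auto
  ultimately show ?thesis
    unfolding lap_apply_def hdeg_def using finite_edge[OF e] by simp
qed

lemma lap_apply_cong:
  assumes "\<And>j. j \<in> {1..n} \<Longrightarrow> x j = y j" and "i \<in> {1..n}"
  shows "lap_apply E k x i = lap_apply E k y i"
proof -
  have "(\<Prod>s\<in>e - {i}. x s) = (\<Prod>s\<in>e - {i}. y s)" if "e \<in> E" for e
    using assms(1) edge_subset[OF that] by (intro prod.cong) auto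
  then show ?thesis
    unfolding lap_apply_def using assms by (auto intro: sum.cong)
qed

lemma H_eigenvector_cong:
  assumes "\<And>j. j \<in> {1..n} \<Longrightarrow> x j = y j"
  shows "H_eigenvector n E k lam x \<longleftrightarrow> H_eigenvector n E k lam y"
  unfolding H_eigenvector_def using assms lap_apply_cong[OF assms] by auto

lemma star_vec_leaf:
  assumes "S \<subseteq> E" "e \<in> E" "j \<in> e - {1}"
  shows "star_vec lam S j = (if e \<in> S then 1 else 0)"
  using unique_edge[OF assms(2)] assms unfolding star_vec_def by auto

lemma star_vec_outside:
  assumes "S \<subseteq> E" "j \<notin> {1..n}"
  shows "star_vec lam S j = 0"
  using assms edge_subset heart_in_vertices unfolding star_vec_def by fastforce

lemma prod_leaves_star_vec:
  assumes "S \<subseteq> E" "e \<in> E"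
  shows "(\<Prod>s\<in>e - {1}. c * star_vec lam S s) = (if e \<in> S then c ^ (k - 1) else 0)"
proof -
  have "(\<Prod>s\<in>e - {1}. c * star_vec lam S s) = (\<Prod>s\<in>e - {1}. if e \<in> S then c else 0)"
    using star_vec_leaf[OF assms] by (intro prod.cong) auto
  then show ?thesis
    using card_leaves[OF assms(2)] k_ge_3 by simp
qed

lemma lap_apply_star_vec_heart:
  assumes "S \<subseteq> E"
  shows "lap_apply E k (\<lambda>j. c * star_vec lam S j) 1
           = real d * (c * (1 - lam)) ^ (k - 1) - real (card S) * c ^ (k - 1)"
proof -
  have "(\<Sum>e\<in>E. \<Prod>s\<in>e - {1}. c * star_vec lam S s) = (\<Sum>e\<in>E. if e \<in> S then c ^ (k - 1) else 0)"
    using prod_leaves_star_vec[OF assms] by (intro sum.cong) auto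
  also have "\<dots> = real (card S) * c ^ (k - 1)"
    using assms finite_edges by (simp add: sum.If_cases Int_absorb1 Int_commute)
  finally show ?thesis
    unfolding lap_apply_heart by (simp add: star_vec_def)
qed

lemma lap_apply_star_vec_leaf:
  assumes "S \<subseteq> E" "i \<in> {1..n}" "i \<noteq> 1"
  shows "lap_apply E k (\<lambda>j. c * star_vec lam S j) i = lam * (c * star_vec lam S i) ^ (k - 1)"
proof -
  obtain e where e: "e \<in> E" and i: "i \<in> e - {1}"
    using assms edges_cover by blast
  have "(\<Prod>s\<in>e - {1} - {i}. c * star_vec lam S s) = (\<Prod>s\<in>e - {1} - {i}. if e \<in> S then c else 0)"
    using star_vec_leaf[OF assms(1) e] by (intro prod.cong) auto
  then have "(\<Prod>s\<in>e - {1} - {i}. c * star_vec lam S s) = (if e \<in> S then c ^ (k - 2) else 0)"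
    using card_other_leaves[OF e i] k_ge_3 by simp
  moreover have "k - 1 = Suc (k - 2)"
    using k_ge_3 by simp
  ultimately show ?thesis
    unfolding lap_apply_leaf[OF e i] star_vec_leaf[OF assms(1) e i]
    by (simp add: star_vec_def algebra_simps)
qed

lemma H_eigenvector_star_vec_iff:
  assumes "S \<subseteq> E" "c \<noteq> 0" "lam \<noteq> 1"
  shows "H_eigenvector n E k lam (\<lambda>j. c * star_vec lam S j) \<longleftrightarrow> fpoly k d (card S) lam = 0"
proof -
  define x where "x = (\<lambda>j. c * star_vec lam S j)"
  have heart: "x 1 = c * (1 - lam)"
    unfolding x_def star_vec_def by simp
  have "lap_apply E k x 1 - lam * x 1 ^ (k - 1) = - (c ^ (k - 1) * fpoly k d (card S) lam)"
    unfolding heart unfolding x_def lap_apply_star_vec_heart[OF assms(1)] fpoly_def power_mult_distrib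
    by (simp add: algebra_simps)
  then have "lap_apply E k x 1 = lam * x 1 ^ (k - 1) \<longleftrightarrow> fpoly k d (card S) lam = 0"
    using assms(2) by auto
  moreover have "lap_apply E k x i = lam * x i ^ (k - 1)" if "i \<in> {1..n}" "i \<noteq> 1" for i
    unfolding x_def using lap_apply_star_vec_leaf[OF assms(1) that] .
  moreover have "x 1 \<noteq> 0"
    using heart assms(2,3) by simp
  ultimately show ?thesis
    unfolding H_eigenvector_def x_def[symmetric] using heart_in_vertices by blast
qed

lemma eigenvector_heart_nonzero:
  assumes "lam \<noteq> 1" "H_eigenvector n E k lam x"
  shows "x 1 \<noteq> 0"
proof
  assume heart: "x 1 = 0"
  have "x i = 0" if i: "i \<in> {1..n}" "i \<noteq> 1" for i
  proof -
    obtain e where e: "e \<in> E" and "i \<in> e - {1}"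
      using i edges_cover by blast
    then have "x i ^ (k - 1) = lam * x i ^ (k - 1)"
      using assms(2) i heart lap_apply_leaf[OF e, of i x] unfolding H_eigenvector_def by simp
    then have "(1 - lam) * x i ^ (k - 1) = 0"
      by (simp add: algebra_simps)
    then show ?thesis
      using assms(1) by simp
  qed
  then show False
    using assms(2) heart unfolding H_eigenvector_def by blast
qed

end

locale odd_hyperstar = hyperstar_graph +
  assumes odd_k: "odd k"
begin

lemma eigenvector_edge_dichotomy:
  assumes lam: "lam \<noteq> 1" and eigen: "\<forall>i\<in>{1..n}. lap_apply E k x i = lam * x i ^ (k - 1)"
    and heart: "x 1 = c * (1 - lam)" and e: "e \<in> E"
  shows "(\<forall>j\<in>e - {1}. x j = c) \<or> (\<forall>j\<in>e - {1}. x j = 0)"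
proof -
  have leaf_eq: "x j ^ (k - 1) = c * (\<Prod>s\<in>e - {1} - {j}. x s)" if j: "j \<in> e - {1}" for j
  proof -
    have "x j ^ (k - 1) - c * (1 - lam) * (\<Prod>s\<in>e - {1} - {j}. x s) = lam * x j ^ (k - 1)"
      using eigen edge_subset[OF e] j heart lap_apply_leaf[OF e j, of x] by auto
    then have "(1 - lam) * (x j ^ (k - 1) - c * (\<Prod>s\<in>e - {1} - {j}. x s)) = 0"
      by (simp add: algebra_simps)
    then show ?thesis
      using lam by simp
  qed
  have k_pred: "Suc (k - 1) = k" "Suc (k - 2) = k - 1"
    using k_ge_3 by auto
  have "x j ^ k = c * (\<Prod>s\<in>e - {1}. x s)" if j: "j \<in> e - {1}" for j
  proof -
    have "(\<Prod>s\<in>e - {1}. x s) = x j * (\<Prod>s\<in>e - {1} - {j}. x s)"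
      using j finite_edge[OF e] by (intro prod.remove) auto
    then show ?thesis
      using leaf_eq[OF j] power_Suc[of "x j" "k - 1", unfolded k_pred] by simp
  qed
  then have same: "x j = x j'" if "j \<in> e - {1}" "j' \<in> e - {1}" for j j'
    using that odd_real_root_power_cancel[OF odd_k, of "x j"]
      odd_real_root_power_cancel[OF odd_k, of "x j'"] by metis
  have "card (e - {1}) \<noteq> 0"
    using card_leaves[OF e] k_ge_3 by simp
  then have "e - {1} \<noteq> {}"
    by (metis card.empty)
  then obtain j0 where j0: "j0 \<in> e - {1}"
    by blast
  have "(\<Prod>s\<in>e - {1} - {j0}. x s) = (\<Prod>s\<in>e - {1} - {j0}. x j0)"
    using same[OF j0] by (intro prod.cong) auto
  then have other_leaves: "(\<Prod>s\<in>e - {1} - {j0}. x s) = x j0 ^ (k - 2)"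
    using card_other_leaves[OF e j0] by simp
  have "x j0 * x j0 ^ (k - 2) = c * x j0 ^ (k - 2)"
    unfolding power_Suc[of "x j0" "k - 2", unfolded k_pred, symmetric]
    by (simp only: leaf_eq[OF j0] other_leaves)
  then have "x j0 = c \<or> x j0 = 0"
    by (cases "x j0 = 0") simp_all
  moreover have "\<forall>j\<in>e - {1}. x j = x j0"
    using same j0 by blast
  ultimately show ?thesis
    by simp
qed

lemma eigenvector_is_star_vec:
  assumes lam: "lam \<noteq> 1" and H: "H_eigenvector n E k lam x"
  shows "\<exists>c S. c \<noteq> 0 \<and> S \<subseteq> E \<and> (\<forall>j\<in>{1..n}. x j = c * star_vec lam S j)"
proof -
  have eigen: "\<forall>i\<in>{1..n}. lap_apply E k x i = lam * x i ^ (k - 1)"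
    using H unfolding H_eigenvector_def by blast
  define c where "c = x 1 / (1 - lam)"
  have heart: "x 1 = c * (1 - lam)"
    using lam unfolding c_def by simp
  have "c \<noteq> 0"
    using heart eigenvector_heart_nonzero[OF lam H] by auto
  define S where "S = {e\<in>E. \<forall>j\<in>e - {1}. x j = c}"
  have S: "S \<subseteq> E"
    unfolding S_def by blast
  have "x j = c * star_vec lam S j" if j: "j \<in> {1..n}" for j
  proof (cases "j = 1")
    case True
    then show ?thesis
      using heart by (simp add: star_vec_def)
  next
    case False
    then obtain e where e: "e \<in> E" and j_leaf: "j \<in> e - {1}"
      using j edges_cover by blast
    show ?thesis
    proof (cases "e \<in> S")
      case True
      then have "x j = c"
        using j_leaf unfolding S_def by blast
      then show ?thesis
        using True star_vec_leaf[OF S e j_leaf] by simp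
    next
      case False
      then have "\<not> (\<forall>j\<in>e - {1}. x j = c)"
        using e unfolding S_def by blast
      then have "x j = 0"
        using eigenvector_edge_dichotomy[OF lam eigen heart e] j_leaf by blast
      then show ?thesis
        using False star_vec_leaf[OF S e j_leaf] by simp
    qed
  qed
  then show ?thesis
    using \<open>c \<noteq> 0\<close> S by blast
qed

lemma H_eigenvalue_iff_fpoly_root:
  assumes lam: "lam \<noteq> 1"
  shows "H_eigenvalue n E k lam \<longleftrightarrow> (\<exists>r\<in>{0..d}. fpoly k d r lam = 0)"
proof
  assume "H_eigenvalue n E k lam"
  then obtain x where H: "H_eigenvector n E k lam x"
    unfolding H_eigenvalue_def by blast
  then obtain c S where cS: "c \<noteq> 0" "S \<subseteq> E" and "\<forall>j\<in>{1..n}. x j = c * star_vec lam S j"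
    using eigenvector_is_star_vec[OF lam] by blast
  then have "H_eigenvector n E k lam (\<lambda>j. c * star_vec lam S j)"
    using H H_eigenvector_cong[of x "\<lambda>j. c * star_vec lam S j"] by simp
  then have "fpoly k d (card S) lam = 0"
    using H_eigenvector_star_vec_iff[OF cS(2,1) lam] by blast
  moreover have "card S \<le> d"
    using card_mono[OF finite_edges cS(2)] card_edges by simp
  ultimately show "\<exists>r\<in>{0..d}. fpoly k d r lam = 0"
    by auto
next
  assume "\<exists>r\<in>{0..d}. fpoly k d r lam = 0"
  then obtain r where "r \<le> card E" "fpoly k d r lam = 0"
    using card_edges by auto
  moreover obtain S where "S \<subseteq> E" "card S = r"
    using obtain_subset_with_card_n[OF \<open>r \<le> card E\<close>] by metis
  ultimately have "H_eigenvector n E k lam (\<lambda>j. 1 * star_vec lam S j)"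
    using H_eigenvector_star_vec_iff[of S 1 lam] lam by simp
  then show "H_eigenvalue n E k lam"
    unfolding H_eigenvalue_def by blast
qed

lemma H_eigenvector_iff_star_vec:
  assumes lam: "lam \<noteq> 1" and root: "fpoly k d r lam = 0"
    and support: "\<forall>j. j \<notin> {1..n} \<longrightarrow> x j = 0"
  shows "H_eigenvector n E k lam x \<longleftrightarrow>
           (\<exists>c. c \<noteq> 0 \<and> (\<exists>S\<subseteq>E. card S = r \<and> (\<forall>j. x j = c * star_vec lam S j)))"
proof
  assume H: "H_eigenvector n E k lam x"
  then obtain c S where cS: "c \<noteq> 0" "S \<subseteq> E" and on_vertices: "\<forall>j\<in>{1..n}. x j = c * star_vec lam S j"
    using eigenvector_is_star_vec[OF lam] by blast
  then have "fpoly k d (card S) lam = 0"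
    using H H_eigenvector_star_vec_iff[OF cS(2,1) lam] H_eigenvector_cong[of x "\<lambda>j. c * star_vec lam S j"]
    by simp
  then have "card S = r"
    using root fpoly_root_unique by blast
  moreover have "\<forall>j. x j = c * star_vec lam S j"
    using on_vertices support star_vec_outside[OF cS(2)] by auto
  ultimately show "\<exists>c. c \<noteq> 0 \<and> (\<exists>S\<subseteq>E. card S = r \<and> (\<forall>j. x j = c * star_vec lam S j))"
    using cS by blast
next
  assume "\<exists>c. c \<noteq> 0 \<and> (\<exists>S\<subseteq>E. card S = r \<and> (\<forall>j. x j = c * star_vec lam S j))"
  then obtain c S where "c \<noteq> 0" "S \<subseteq> E" "card S = r" "x = (\<lambda>j. c * star_vec lam S j)"
    by blast
  then show "H_eigenvector n E k lam x"
    using H_eigenvector_star_vec_iff lam root by simp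
qed

end

theorem proposition5p1:
  fixes k d n :: nat and E :: "nat set set"
  assumes "k \<ge> 3" and "odd k" and "d \<ge> 2" and "hyperstar k d n E"
  shows "(\<forall>lam::real. lam \<noteq> 1 \<longrightarrow>
            (H_eigenvalue n E k lam \<longleftrightarrow> (\<exists>r\<in>{0..d}. fpoly k d r lam = 0)))
       \<and> (\<forall>(lam::real) (r::nat). lam \<noteq> 1 \<longrightarrow> r \<le> d \<longrightarrow> fpoly k d r lam = 0 \<longrightarrow>
            (\<forall>x::nat \<Rightarrow> real. (\<forall>j. j \<notin> {1..n} \<longrightarrow> x j = 0) \<longrightarrow>
              (H_eigenvector n E k lam x \<longleftrightarrow>
                (\<exists>c::real. c \<noteq> 0 \<and> (\<exists>S\<subseteq>E. card S = r \<and> (\<forall>j. x j = c * star_vec lam S j))))))"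
proof -
  interpret odd_hyperstar k d n E
    using assms by unfold_locales auto
  show ?thesis
    using H_eigenvalue_iff_fpoly_root H_eigenvector_iff_star_vec by (intro conjI allI impI) simp_all
qed

end
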